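(* Let $G=(V,E)$ be an infinite graph satisfying the $CD\psi(n,-K)$ condition for some $n>0$, $K>0$, with $D_\mu<\infty$ and $D_w<\infty$, where $\psi:(0,+\infty)\to\mathbb R$ is a $C^1$ concave function with $\psi>0$ and $\psi'>0$ (and $\psi(1)D_w$ in the image of $\psi$). Let $u$ be a positive solution of the heat equation $\partial_t u=\Delta u$ on $V$. Then for all vertices and all $t>0$, $$\Gamma^{\psi}(u)-\psi'(1)\frac{\partial_{t}u}{u}\leq \frac{n}{2t}+\sqrt{nKC},\qquad C=D_{\mu}\left[\psi'(1)\left(\psi^{-1}(\psi(1)D_{w})-1\right)+\psi(1)\right].$$
   Context: Graphs: $G=(V,E)$ is a connected, locally finite graph; each edge $xy$ carries a weight $w_{xy}>0$ (possibly asymmetric), and $\mu:V\to(0,\infty)$ is a vertex measure; $y\sim x$ means $xy\in E$, $\deg(x)=\sum_{y\sim x}w_{xy}<\infty$, $D_\mu=\sup_{x}\deg(x)/\mu(x)$, $D_w=\sup_{x\sim y}\deg(x)/w_{xy}$. Laplacian: $\Delta f(x)=\frac{1}{\mu(x)}\sum_{y\sim x}w_{xy}(f(y)-f(x))$. For $\psi:(0,\infty)\to\mathbb R$ and $f:V\to(0,\infty)$: $\Delta^\psi f(x)=\Delta\big[\psi\big(\tfrac{f}{f(x)}\big)\big](x)$; for $C^1$ $\psi$, $\overline\psi(s)=\psi'(1)(s-1)-(\psi(s)-\psi(1))$ and $\Gamma^\psi f=\Delta^{\overline\psi}f$; $(\Omega^\psi f)(x)=\Delta\big[\psi'\big(\tfrac{f}{f(x)}\big)\tfrac{f}{f(x)}\big(\tfrac{\Delta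 f}{f}-\tfrac{\Delta f(x)}{f(x)}\big)\big](x)$; $2\Gamma_2^\psi(f)=\Omega^\psi f+\frac{\Delta f\,\Delta^\psi f}{f}-\frac{\Delta(f\Delta^\psi f)}{f}$. The graph satisfies $CD\psi(n,K)$ if for every $f:V\to(0,\infty)$ and every vertex, $\Gamma_2^\psi(f)\ge\frac1n(\Delta^\psi f)^2+K\Gamma^\psi(f)$. $\psi^{-1}$ is the inverse function of $\psi$. A positive solution of the heat equation on $U\subset V$ is $u:V\times[0,\infty)\to(0,\infty)$, continuously differentiable in $t$, with $\partial_t u=\Delta u$ at every $x\in U$, $t\ge0$; operators are applied to $u(\cdot,t)$ at each fixed time. *)

theory Defs
  imports "HOL-Analysis.Analysis"
begin

text \<open>Weighted graph: adjacency relation E (y \<sim> x iff E x y), weights w x y, vertex measure mu.\<close>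

definition nbrs :: "('v \<Rightarrow> 'v \<Rightarrow> bool) \<Rightarrow> 'v \<Rightarrow> 'v set" where
  "nbrs E x = {y. E x y}"

definition deg :: "('v \<Rightarrow> 'v \<Rightarrow> bool) \<Rightarrow> ('v \<Rightarrow> 'v \<Rightarrow> real) \<Rightarrow> 'v \<Rightarrow> real" where
  "deg E w x = (\<Sum>y\<in>nbrs E x. w x y)"

definition D_mu :: "('v \<Rightarrow> 'v \<Rightarrow> bool) \<Rightarrow> ('v \<Rightarrow> 'v \<Rightarrow> real) \<Rightarrow> ('v \<Rightarrow> real) \<Rightarrow> real" where
  "D_mu E w mu = Sup (range (\<lambda>x. deg E w x / mu x))"

definition D_w :: "('v \<Rightarrow> 'v \<Rightarrow> bool) \<Rightarrow> ('v \<Rightarrow> 'v \<Rightarrow> real) \<Rightarrow> real" where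
  "D_w E w = Sup {deg E w x / w x y | x y. E x y}"

definition weighted_graph :: "('v \<Rightarrow> 'v \<Rightarrow> bool) \<Rightarrow> ('v \<Rightarrow> 'v \<Rightarrow> real) \<Rightarrow> ('v \<Rightarrow> real) \<Rightarrow> bool" where
  "weighted_graph E w mu \<longleftrightarrow>
     (\<forall>x y. E x y \<longrightarrow> E y x) \<and> (\<forall>x. \<not> E x x) \<and>
     (\<forall>x y. E\<^sup>*\<^sup>* x y) \<and>
     (\<forall>x. finite (nbrs E x)) \<and>
     (\<forall>x y. E x y \<longrightarrow> w x y > 0) \<and>
     (\<forall>x. mu x > 0)"

definition lap :: "('v \<Rightarrow> 'v \<Rightarrow> bool) \<Rightarrow> ('v \<Rightarrow> 'v \<Rightarrow> real) \<Rightarrow> ('v \<Rightarrow> real)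
                   \<Rightarrow> ('v \<Rightarrow> real) \<Rightarrow> 'v \<Rightarrow> real" where
  "lap E w mu f x = (1 / mu x) * (\<Sum>y\<in>nbrs E x. w x y * (f y - f x))"

definition lap_psi :: "('v \<Rightarrow> 'v \<Rightarrow> bool) \<Rightarrow> ('v \<Rightarrow> 'v \<Rightarrow> real) \<Rightarrow> ('v \<Rightarrow> real)
                   \<Rightarrow> (real \<Rightarrow> real) \<Rightarrow> ('v \<Rightarrow> real) \<Rightarrow> 'v \<Rightarrow> real" where
  "lap_psi E w mu psi f x = lap E w mu (\<lambda>y. psi (f y / f x)) x"

definition psibar :: "(real \<Rightarrow> real) \<Rightarrow> real \<Rightarrow> real" where
  "psibar psi s = deriv psi 1 * (s - 1) - (psi s - psi 1)"

definition Gamma_psi :: "('v \<Rightarrow> 'v \<Rightarrow> bool) \<Rightarrow> ('v \<Rightarrow> 'v \<Rightarrow> real) \<Rightarrow> ('v \<Rightarrow> real)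
                   \<Rightarrow> (real \<Rightarrow> real) \<Rightarrow> ('v \<Rightarrow> real) \<Rightarrow> 'v \<Rightarrow> real" where
  "Gamma_psi E w mu psi f x = lap_psi E w mu (psibar psi) f x"

definition Omega_psi :: "('v \<Rightarrow> 'v \<Rightarrow> bool) \<Rightarrow> ('v \<Rightarrow> 'v \<Rightarrow> real) \<Rightarrow> ('v \<Rightarrow> real)
                   \<Rightarrow> (real \<Rightarrow> real) \<Rightarrow> ('v \<Rightarrow> real) \<Rightarrow> 'v \<Rightarrow> real" where
  "Omega_psi E w mu psi f x =
     lap E w mu (\<lambda>y. deriv psi (f y / f x) * (f y / f x) *
                      (lap E w mu f y / f y - lap E w mu f x / f x)) x"

definition Gamma2_psi :: "('v \<Rightarrow> 'v \<Rightarrow> bool) \<Rightarrow> ('v \<Rightarrow> 'v \<Rightarrow> real) \<Rightarrow> ('v \<Rightarrow> real)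
                   \<Rightarrow> (real \<Rightarrow> real) \<Rightarrow> ('v \<Rightarrow> real) \<Rightarrow> 'v \<Rightarrow> real" where
  "Gamma2_psi E w mu psi f x = (1/2) *
     (Omega_psi E w mu psi f x
      + lap E w mu f x * lap_psi E w mu psi f x / f x
      - lap E w mu (\<lambda>y. f y * lap_psi E w mu psi f y) x / f x)"

definition CD_psi :: "('v \<Rightarrow> 'v \<Rightarrow> bool) \<Rightarrow> ('v \<Rightarrow> 'v \<Rightarrow> real) \<Rightarrow> ('v \<Rightarrow> real)
                   \<Rightarrow> (real \<Rightarrow> real) \<Rightarrow> real \<Rightarrow> real \<Rightarrow> bool" where
  "CD_psi E w mu psi n K \<longleftrightarrow>
     (\<forall>f x. (\<forall>y. f y > 0) \<longrightarrow>
        Gamma2_psi E w mu psi f x \<ge> (1/n) * (lap_psi E w mu psi f x)\<^sup>2 + K * Gamma_psi E w mu psi f x)"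

definition heat_solution :: "('v \<Rightarrow> 'v \<Rightarrow> bool) \<Rightarrow> ('v \<Rightarrow> 'v \<Rightarrow> real) \<Rightarrow> ('v \<Rightarrow> real)
                   \<Rightarrow> ('v \<Rightarrow> real \<Rightarrow> real) \<Rightarrow> bool" where
  "heat_solution E w mu u \<longleftrightarrow>
     (\<forall>x t. t \<ge> 0 \<longrightarrow> u x t > 0) \<and>
     (\<forall>x. \<exists>u'. continuous_on {0..} u' \<and>
        (\<forall>t\<ge>0. (u x has_real_derivative u' t) (at t within {0..}) \<and>
                u' t = lap E w mu (\<lambda>y. u y t) x))"

end

theory Submission
  imports Defs
begin

text \<open>
  Write \<open>F x t = - \<Delta>\<^sup>\<psi> u(x,t)\<close>; this is exactly the left-hand side of the estimate. Along the heat
  flow \<open>\<partial>\<^sub>t F = - \<Omega>\<^sup>\<psi> u\<close>, and \<open>2 \<Gamma>\<^sub>2\<^sup>\<psi> = \<Omega>\<^sup>\<psi> + \<mu>(x)\<^sup>-\<^sup>1 \<Sum>\<^sub>y w\<^sub>x\<^sub>y (u(y)/u(x)) (F y - F x)\<close>.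
  Where \<open>F x t \<ge> 0\<close> the neighbour ratios \<open>u(y)/u(x)\<close> are at most \<open>R = \<psi>\<^sup>-\<^sup>1(\<psi>(1) D\<^sub>w)\<close>, hence
  \<open>\<Gamma>\<^sup>\<psi> u \<le> C\<close>, and \<open>CD\<psi>(n,-K)\<close> yields \<open>\<partial>\<^sub>t F \<le> -(2/n) F\<^sup>2 + 2KC + D\<^sub>\<mu> R (Z - F)\<close> for every
  upper bound \<open>Z\<close> of \<open>F(\<cdot>,t)\<close>.

  On an infinite graph the supremum of \<open>F(\<cdot>,t)\<close> need not be attained, so instead of following a
  maximum point we compare \<open>F\<close> with the barrier \<open>n/(2t) + \<surd>(nKC) + \<delta>\<close>, which is infinite at
  \<open>t = 0\<close> while \<open>F\<close> is bounded. At the first time the barrier is approached, take a vertex where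
  \<open>F\<close> comes within \<open>\<eta>\<close> of it, and use the barrier itself as \<open>Z\<close>: the Riccati inequality makes the
  gap between barrier and \<open>F\<close> increase at a fixed rate as long as it is small, so it cannot have
  shrunk below \<open>\<eta>\<close>. Letting \<open>\<delta> \<rightarrow> 0\<close> gives the estimate.
\<close>

lemma DERIV_pos_imp_strict_mono_on_greaterThan:
  fixes f :: "real \<Rightarrow> real"
  assumes "\<And>s. a < s \<Longrightarrow> (f has_real_derivative f' s) (at s)" and "\<And>s. a < s \<Longrightarrow> 0 < f' s"
  shows "strict_mono_on {a<..} f"
proof (rule strict_mono_onI)
  fix r s assume r: "r \<in> {a<..}" and "s \<in> {a<..}" "r < s"
  show "f r < f s"
  proof (rule DERIV_pos_imp_increasing[OF \<open>r < s\<close>])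
    fix z assume "r \<le> z" "z \<le> s"
    hence "a < z" using r by simp
    thus "\<exists>y. (f has_real_derivative y) (at z) \<and> 0 < y" using assms by blast
  qed
qed

lemma strict_mono_on_le_the_inv_into:
  fixes f :: "'a::linorder \<Rightarrow> 'b::linorder"
  assumes "strict_mono_on A f" "b \<in> f ` A" "a \<in> A" "f a \<le> b"
  shows "a \<le> the_inv_into A f b"
proof -
  have inj: "inj_on f A" using assms(1) by (rule strict_mono_on_imp_inj_on)
  have "f a \<le> f (the_inv_into A f b)" using f_the_inv_into_f[OF inj assms(2)] assms(4) by simp
  thus ?thesis using strict_mono_on_less_eq[OF assms(1) assms(3) the_inv_into_into[OF inj assms(2) subset_refl]] by simp
qed

lemma last_nonpos_point:
  fixes h :: "real \<Rightarrow> real"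
  assumes "p \<le> q" "continuous_on {p..q} h" "h p \<le> 0" "h q > 0"
  obtains s0 where "p \<le> s0" "s0 < q" "h s0 \<le> 0" "\<And>s. s0 < s \<Longrightarrow> s \<le> q \<Longrightarrow> h s > 0"
proof -
  define S where "S = {p..q} \<inter> h -` {..0}"
  have "closed S" unfolding S_def
    by (rule continuous_closed_preimage) (use assms in auto)
  moreover have "p \<in> S" "bdd_above S" using assms unfolding S_def by auto
  ultimately have s0S: "Sup S \<in> S" using closed_contains_Sup by blast
  have "h s > 0" if "Sup S < s" "s \<le> q" for s
    using that s0S cSup_upper[OF _ \<open>bdd_above S\<close>, of s] unfolding S_def by force
  moreover have "Sup S \<noteq> q" using s0S assms(4) unfolding S_def by auto
  ultimately show ?thesis using s0S that unfolding S_def by force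
qed

lemma linear_growth_bound:
  fixes G :: "real \<Rightarrow> real"
  assumes der: "\<And>s. s > 0 \<Longrightarrow> (G has_real_derivative G' s) (at s)"
    and slope: "\<And>s. s > 0 \<Longrightarrow> G s \<ge> 0 \<Longrightarrow> G' s \<le> B"
    and "0 < t0" "t0 \<le> t" "0 \<le> A" "G t0 \<le> A" "0 \<le> B"
  shows "G t \<le> A + B * (t - t0)"
proof (rule ccontr)
  assume c: "\<not> ?thesis"
  define H where "H s = G s - A - B * (s - t0)" for s
  have H_der: "(H has_real_derivative G' s - B) (at s)" if "s > 0" for s
    unfolding H_def using der[OF that] by (auto intro!: derivative_eq_intros)
  have "continuous_on {t0..t} H"
    using H_der assms(3) by (intro DERIV_atLeastAtMost_imp_continuous_on) (meson less_le_trans)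
  moreover have "H t0 \<le> 0" "H t > 0" using c assms(6) unfolding H_def by auto
  ultimately obtain s0 where s0: "t0 \<le> s0" "s0 < t" "H s0 \<le> 0" "\<And>s. s0 < s \<Longrightarrow> s \<le> t \<Longrightarrow> H s > 0"
    using last_nonpos_point[OF assms(4)] by blast
  obtain z where z: "s0 < z" "z < t" "H t - H s0 = (t - s0) * (G' z - B)"
    using MVT2[OF s0(2), of H "\<lambda>s. G' s - B"] H_der s0(1) assms(3) by force
  have "0 \<le> B * (z - t0)" using assms(7) s0(1) z(1) by simp
  hence "G z \<ge> 0" using s0(4)[of z] z assms(5) unfolding H_def by linarith
  hence "G' z \<le> B" using slope z s0 assms(3) by auto
  hence "(t - s0) * (G' z - B) \<le> 0" using z(1,2) by (intro mult_nonneg_nonpos) auto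
  hence "H t \<le> H s0" using z(3) by linarith
  thus False using s0 c unfolding H_def by auto
qed

lemma ge_min_if_slope_ge_below:
  fixes g :: "real \<Rightarrow> real"
  assumes der: "\<And>s. p \<le> s \<Longrightarrow> s \<le> q \<Longrightarrow> (g has_real_derivative g' s) (at s)"
    and slope: "\<And>s. p < s \<Longrightarrow> s < q \<Longrightarrow> g s \<le> c \<Longrightarrow> m \<le> g' s"
    and "p \<le> q" "0 \<le> g p" "0 \<le> m"
  shows "min c (m * (q - p)) \<le> g q"
proof -
  have cont: "continuous_on {s..q} g" if "p \<le> s" for s
    using der that by (intro DERIV_atLeastAtMost_imp_continuous_on) (metis order_trans)
  show ?thesis
  proof (cases "\<exists>s\<in>{p..q}. c \<le> g s")
    case True
    then obtain s where s: "p \<le> s" "s \<le> q" "c \<le> g s" by auto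
    show ?thesis
    proof (cases "c \<le> g q")
      case False
      have "continuous_on {s..q} (\<lambda>r. c - g r)" using cont[OF s(1)] by (intro continuous_intros)
      moreover have "c - g s \<le> 0" "c - g q > 0" using s False by auto
      ultimately obtain s0 where s0: "s \<le> s0" "s0 < q" "c - g s0 \<le> 0" "\<And>r. s0 < r \<Longrightarrow> r \<le> q \<Longrightarrow> c - g r > 0"
        using last_nonpos_point[OF s(2)] by blast
      obtain z where z: "s0 < z" "z < q" "g q - g s0 = (q - s0) * g' z"
        using MVT2[OF s0(2), of g g'] der s0(1) s(1) by force
      have "m \<le> g' z" using slope[of z] s0(1) s0(4)[of z] s z by force
      hence "0 \<le> (q - s0) * g' z" using z(1,2) assms(5) by (intro mult_nonneg_nonneg) auto
      hence "g s0 \<le> g q" using z(3) by linarith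
      thus ?thesis using s0(3) by linarith
    qed simp
  next
    case False
    hence below: "g s < c" if "p \<le> s" "s \<le> q" for s using that by (simp add: not_le)
    show ?thesis
    proof (cases "p = q")
      case False
      hence "p < q" using assms(3) by simp
      then obtain z where z: "p < z" "z < q" "g q - g p = (q - p) * g' z"
        using MVT2[of p q g g'] der by force
      have "m \<le> g' z" using slope z below[of z] by simp
      hence "m * (q - p) \<le> g' z * (q - p)" using z(1,2) by (intro mult_right_mono) auto
      hence "m * (q - p) \<le> g q" using z(3) assms(4) by (simp add: mult.commute)
      thus ?thesis by simp
    qed (use assms(4) in simp)
  qed
qed

section \<open>A maximum principle for Riccati-type families\<close>

locale riccati_family =
  fixes F F' :: "'v \<Rightarrow> real \<Rightarrow> real" and a b L M :: real
  assumes has_deriv: "\<And>x t. 0 < t \<Longrightarrow> (F x has_real_derivative F' x t) (at t)"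
    and bounded: "\<And>x t. 0 < t \<Longrightarrow> F x t \<le> M"
    and riccati: "\<And>x t Z. 0 < t \<Longrightarrow> 0 \<le> F x t \<Longrightarrow> (\<And>y. F y t \<le> Z) \<Longrightarrow>
                    F' x t \<le> - a * (F x t)\<^sup>2 + b + L * (Z - F x t)"
    and a_pos: "0 < a" and b_nonneg: "0 \<le> b" and L_nonneg: "0 \<le> L" and M_nonneg: "0 \<le> M"
begin

lemma growth_bound:
  assumes "0 < t0" "t0 \<le> t" "0 \<le> A" "F x t0 \<le> A"
  shows "F x t \<le> A + (b + L * M) * (t - t0)"
proof (rule linear_growth_bound[where G = "F x" and G' = "F' x"])
  fix s :: real assume s: "0 < s" "0 \<le> F x s"
  have "F' x s \<le> - a * (F x s)\<^sup>2 + b + L * (M - F x s)"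
    using riccati[of s x M] bounded s by blast
  moreover have "0 \<le> a * (F x s)\<^sup>2" "0 \<le> L * F x s" using a_pos L_nonneg s(2) by simp_all
  ultimately show "F' x s \<le> b + L * M" by (simp add: right_diff_distrib)
qed (use has_deriv assms b_nonneg L_nonneg M_nonneg in auto)

definition barrier :: "real \<Rightarrow> real \<Rightarrow> real" where
  "barrier \<delta> t = 1 / (a * t) + sqrt (b / a) + \<delta>"

lemma has_deriv_barrier: "0 < t \<Longrightarrow> (barrier \<delta> has_real_derivative - 1 / (a * t\<^sup>2)) (at t)"
  unfolding barrier_def[abs_def] using a_pos
  by (auto intro!: derivative_eq_intros simp: power2_eq_square field_simps)

lemma bound_lt_barrier:
  assumes "0 < \<delta>" "0 < t" "t \<le> 1 / (a * (M + 1))"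
  shows "M < barrier \<delta> t"
proof -
  have "a * t * (M + 1) \<le> 1"
    using assms(3) a_pos M_nonneg by (simp add: le_divide_eq mult.commute mult.left_commute)
  hence "M + 1 \<le> 1 / (a * t)"
    using a_pos assms(2) by (simp add: le_divide_eq mult.commute)
  moreover have "0 \<le> sqrt (b / a)" using a_pos b_nonneg by simp
  ultimately show ?thesis unfolding barrier_def using assms(1) by linarith
qed

lemma barrier_not_reached_soon:
  assumes "0 < ts" "0 < \<eta>" "\<eta> < barrier \<delta> ts" and below: "\<And>x. F x ts \<le> barrier \<delta> ts - \<eta>"
  obtains h where "0 < h" "\<And>x t. ts \<le> t \<Longrightarrow> t \<le> ts + h \<Longrightarrow> F x t < barrier \<delta> t"
proof
  define B where "B = b + L * M"
  define c where "c = B + 1 / (a * ts\<^sup>2)"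
  define h where "h = \<eta> / (2 * c)"
  have "0 < c"
    unfolding c_def B_def using assms a_pos b_nonneg L_nonneg M_nonneg by (simp add: add_nonneg_pos)
  hence h_pos: "0 < h" and "h * c = \<eta> / 2" unfolding h_def using assms(2) by simp_all
  hence h_eq: "B * h + h / (a * ts\<^sup>2) = \<eta> / 2" unfolding c_def by (simp add: algebra_simps)
  show "0 < h" by (fact h_pos)
  fix x t assume t: "ts \<le> t" "t \<le> ts + h"
  have "F x t \<le> barrier \<delta> ts - \<eta> + B * (t - ts)"
    unfolding B_def using growth_bound assms below t by simp
  also have "\<dots> \<le> barrier \<delta> ts - \<eta> + B * h"
    unfolding B_def using t b_nonneg L_nonneg M_nonneg by (simp add: mult_left_mono)
  finally have F_le: "F x t \<le> barrier \<delta> ts - \<eta> + B * h" .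
  have "1 / (a * ts) - 1 / (a * t) = (t - ts) / (a * t * ts)"
    using a_pos assms(1) t by (simp add: field_simps)
  also have "\<dots> \<le> (t - ts) / (a * ts\<^sup>2)"
    using a_pos assms(1) t
    by (intro divide_left_mono) (auto simp: power2_eq_square intro!: mult_right_mono mult_pos_pos)
  also have "\<dots> \<le> h / (a * ts\<^sup>2)"
    using t a_pos assms(1) by (simp add: divide_right_mono)
  finally have "barrier \<delta> ts - h / (a * ts\<^sup>2) \<le> barrier \<delta> t"
    unfolding barrier_def by simp
  thus "F x t < barrier \<delta> t" using F_le h_eq assms(2) by linarith
qed

lemma first_barrier_contact:
  assumes "0 < \<delta>" "0 < t0" "barrier \<delta> t0 \<le> F x0 t0"
  obtains ts where "0 < ts" "\<And>x s. 0 < s \<Longrightarrow> s < ts \<Longrightarrow> F x s < barrier \<delta> s"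
    "\<And>\<eta>. 0 < \<eta> \<Longrightarrow> \<eta> < barrier \<delta> ts \<Longrightarrow> \<exists>x. barrier \<delta> ts - \<eta> < F x ts"
proof
  define T where "T = {t. 0 < t \<and> (\<exists>x. barrier \<delta> t \<le> F x t)}"
  define t1 where "t1 = 1 / (a * (M + 1))"
  have t1_pos: "0 < t1" unfolding t1_def using a_pos M_nonneg by simp
  have T_gt: "t1 < t" if t_in: "t \<in> T" for t
  proof (rule ccontr)
    assume "\<not> t1 < t"
    moreover obtain x where "0 < t" "barrier \<delta> t \<le> F x t" using t_in unfolding T_def by blast
    ultimately show False
      using bound_lt_barrier[OF assms(1), of t] bounded[of t x] unfolding t1_def by simp
  qed
  have "t0 \<in> T" unfolding T_def using assms by blast
  hence T_ne: "T \<noteq> {}" by blast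
  have T_bdd: "bdd_below T" using T_gt by (intro bdd_belowI[of _ t1]) (simp add: less_imp_le)
  define ts where "ts = Inf T"
  have "t1 \<le> ts" unfolding ts_def using T_ne T_gt by (intro cInf_greatest) (auto intro: less_imp_le)
  thus ts_pos: "0 < ts" using t1_pos by simp
  show before: "F x s < barrier \<delta> s" if "0 < s" "s < ts" for x s
  proof (rule ccontr)
    assume "\<not> F x s < barrier \<delta> s"
    hence "s \<in> T" using that unfolding T_def by (auto simp: not_less)
    hence "ts \<le> s" unfolding ts_def using T_bdd by (simp add: cInf_lower)
    thus False using that by simp
  qed
  show "\<exists>x. barrier \<delta> ts - \<eta> < F x ts" if \<eta>: "0 < \<eta>" "\<eta> < barrier \<delta> ts" for \<eta>
  proof (rule ccontr)
    assume "\<not> ?thesis"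
    hence "\<And>x. F x ts \<le> barrier \<delta> ts - \<eta>" by (simp add: not_less)
    then obtain h where "0 < h" and after: "\<And>x t. ts \<le> t \<Longrightarrow> t \<le> ts + h \<Longrightarrow> F x t < barrier \<delta> t"
      using barrier_not_reached_soon[OF ts_pos \<eta>] by blast
    then obtain t where t: "t \<in> T" "t < ts + h"
      using cInf_lessD[OF T_ne, of "ts + h"] unfolding ts_def by auto
    moreover have "ts \<le> t" unfolding ts_def using T_bdd t(1) by (simp add: cInf_lower)
    moreover obtain x where "barrier \<delta> t \<le> F x t" using t(1) unfolding T_def by blast
    ultimately show False using after[of t x] by simp
  qed
qed

lemma barrier_gap_slope:
  assumes "0 < \<delta>" "0 < s" and below: "\<And>y. F y s < barrier \<delta> s"
    and gap: "barrier \<delta> s - F x s \<le> min (\<delta> / 2) (a * \<delta>\<^sup>2 / (8 * (L + 1)))"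
  shows "a * \<delta>\<^sup>2 / 8 \<le> - 1 / (a * s\<^sup>2) - F' x s"
proof -
  define k where "k = sqrt (b / a)"
  define q where "q = 1 / (a * s) + k + \<delta> / 2"
  have k: "0 \<le> k" "a * k\<^sup>2 = b" unfolding k_def using a_pos b_nonneg by simp_all
  have q: "0 \<le> q" "q \<le> F x s" using gap k assms(1,2) a_pos unfolding barrier_def q_def k_def by simp_all
  have "F' x s \<le> - a * (F x s)\<^sup>2 + b + L * (barrier \<delta> s - F x s)"
    using riccati[of s x "barrier \<delta> s"] assms(2) below q by (force intro: less_imp_le)
  moreover have "a * q\<^sup>2 \<le> a * (F x s)\<^sup>2" using q a_pos by (simp add: power_mono)
  moreover have "1 / (a * s\<^sup>2) + b + a * \<delta>\<^sup>2 / 4 \<le> a * q\<^sup>2"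
  proof -
    have "a * q\<^sup>2 = 1 / (a * s\<^sup>2) + 2 * (k + \<delta> / 2) / s + a * k\<^sup>2 + a * k * \<delta> + a * \<delta>\<^sup>2 / 4"
      unfolding q_def using a_pos assms(2) by (simp add: power2_eq_square field_simps)
    moreover have "0 \<le> 2 * (k + \<delta> / 2) / s" "0 \<le> a * k * \<delta>" using k a_pos assms(1,2) by simp_all
    ultimately show ?thesis using k by linarith
  qed
  moreover have "L * (barrier \<delta> s - F x s) \<le> a * \<delta>\<^sup>2 / 8"
  proof -
    have "L * (barrier \<delta> s - F x s) \<le> L * (a * \<delta>\<^sup>2 / (8 * (L + 1)))"
      using gap L_nonneg by (intro mult_left_mono) auto
    also have "\<dots> = (a * \<delta>\<^sup>2 / 8) * (L / (L + 1))" using L_nonneg by (simp add: field_simps)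
    also have "\<dots> \<le> a * \<delta>\<^sup>2 / 8" using a_pos L_nonneg by (intro mult_left_le) auto
    finally show ?thesis .
  qed
  ultimately show ?thesis by linarith
qed

lemma below_barrier:
  assumes \<delta>: "0 < \<delta>" and "0 < t"
  shows "F x t < barrier \<delta> t"
proof (rule ccontr)
  assume "\<not> ?thesis"
  hence "barrier \<delta> t \<le> F x t" by simp
  then obtain ts where ts: "0 < ts" and before: "\<And>x s. 0 < s \<Longrightarrow> s < ts \<Longrightarrow> F x s < barrier \<delta> s"
    and contact: "\<And>\<eta>. 0 < \<eta> \<Longrightarrow> \<eta> < barrier \<delta> ts \<Longrightarrow> \<exists>x. barrier \<delta> ts - \<eta> < F x ts"
    using first_barrier_contact[OF \<delta> assms(2)] by blast
  define c where "c = min (\<delta> / 2) (a * \<delta>\<^sup>2 / (8 * (L + 1)))"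
  define m where "m = a * \<delta>\<^sup>2 / 8"
  have "0 < c" "0 < m" unfolding c_def m_def using \<delta> a_pos L_nonneg by simp_all
  have "0 < barrier \<delta> ts" unfolding barrier_def using ts a_pos b_nonneg \<delta> by (simp add: add_pos_nonneg)
  define d where "d = m * (ts - ts / 2)"
  have "0 < d" unfolding d_def using \<open>0 < m\<close> ts by simp
  define \<eta> where "\<eta> = min (min c d) (barrier \<delta> ts) / 2"
  have \<eta>: "0 < \<eta>" "\<eta> < min c d" "\<eta> < barrier \<delta> ts"
    unfolding \<eta>_def using \<open>0 < c\<close> \<open>0 < d\<close> \<open>0 < barrier \<delta> ts\<close> by auto
  obtain x where x: "barrier \<delta> ts - \<eta> < F x ts" using contact \<eta>(1,3) by blast
  define g where "g s = barrier \<delta> s - F x s" for s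
  have "min c d \<le> g ts" unfolding d_def
  proof (rule ge_min_if_slope_ge_below[where g' = "\<lambda>s. - 1 / (a * s\<^sup>2) - F' x s"])
    show "(g has_real_derivative - 1 / (a * s\<^sup>2) - F' x s) (at s)" if "ts / 2 \<le> s" for s
      unfolding g_def[abs_def] using that ts by (intro DERIV_diff has_deriv_barrier has_deriv) auto
    show "m \<le> - 1 / (a * s\<^sup>2) - F' x s" if "ts / 2 < s" "s < ts" "g s \<le> c" for s
    proof -
      have "0 < s" using that(1) ts by linarith
      thus ?thesis using barrier_gap_slope[OF \<delta> \<open>0 < s\<close>] before[OF \<open>0 < s\<close> that(2)] that(3)
        unfolding g_def c_def m_def by blast
    qed
    show "0 \<le> g (ts / 2)" using before[of "ts / 2" x] ts unfolding g_def by simp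
  qed (use ts \<open>0 < m\<close> in simp_all)
  thus False using x \<eta>(2) unfolding g_def by linarith
qed

theorem Li_Yau_bound:
  assumes "0 < t"
  shows "F x t \<le> 1 / (a * t) + sqrt (b / a)"
proof (rule field_le_epsilon)
  fix \<delta> :: real assume "0 < \<delta>"
  from below_barrier[OF this assms, of x] show "F x t \<le> 1 / (a * t) + sqrt (b / a) + \<delta>"
    unfolding barrier_def by simp
qed

end

section \<open>Identities and bounds for the \<open>\<psi>\<close>-operators\<close>

lemma Gamma_psi_sub_lap_eq:
  assumes "f x \<noteq> 0"
  shows "Gamma_psi E w mu psi f x - deriv psi 1 * lap E w mu f x / f x = - lap_psi E w mu psi f x"
proof -
  have one: "f x / f x = 1" using assms by simp
  define S where "S = (\<Sum>y\<in>nbrs E x. w x y * (deriv psi 1 * (f y / f x - 1)))"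
  define T where "T = (\<Sum>y\<in>nbrs E x. w x y * (psi (f y / f x) - psi (f x / f x)))"
  have "deriv psi 1 * lap E w mu f x / f x = (1 / mu x) * S"
  proof -
    have "deriv psi 1 * (\<Sum>y\<in>nbrs E x. w x y * (f y - f x)) / f x = S"
      unfolding S_def sum_distrib_left sum_divide_distrib
      by (rule sum.cong) (use assms in \<open>simp_all add: field_simps\<close>)
    thus ?thesis unfolding lap_def by (metis times_divide_eq_right mult.left_commute)
  qed
  moreover have "(\<Sum>y\<in>nbrs E x. w x y * (psibar psi (f y / f x) - psibar psi (f x / f x))) = S - T"
    unfolding S_def T_def sum_subtractf[symmetric] one
    by (rule sum.cong) (simp_all add: psibar_def algebra_simps)
  ultimately show ?thesis unfolding Gamma_psi_def lap_psi_def lap_def T_def[symmetric]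
    by (simp add: right_diff_distrib)
qed

lemma lap_mult_commutator:
  assumes "f x \<noteq> 0"
  shows "lap E w mu f x * g x / f x - lap E w mu (\<lambda>y. f y * g y) x / f x
       = (1 / mu x) * (\<Sum>y\<in>nbrs E x. w x y * (f y / f x) * (g x - g y))"
proof -
  define A where "A = (\<Sum>y\<in>nbrs E x. w x y * (f y - f x))"
  define B where "B = (\<Sum>y\<in>nbrs E x. w x y * (f y * g y - f x * g x))"
  define C where "C = (\<Sum>y\<in>nbrs E x. w x y * (f y / f x) * (g x - g y))"
  have "A * g x - B = C * f x"
    unfolding A_def B_def C_def sum_distrib_right sum_subtractf[symmetric]
    by (rule sum.cong) (use assms in \<open>simp_all add: field_simps\<close>)
  have "lap E w mu f x * g x / f x - lap E w mu (\<lambda>y. f y * g y) x / f x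
      = (1 / mu x) * ((A * g x - B) / f x)"
    unfolding lap_def A_def[symmetric] B_def[symmetric] by (simp add: diff_divide_distrib mult.commute)
  also have "\<dots> = (1 / mu x) * C" using \<open>A * g x - B = C * f x\<close> assms by simp
  finally show ?thesis unfolding C_def .
qed

lemma two_Gamma2_psi_eq:
  assumes "f x \<noteq> 0"
  shows "2 * Gamma2_psi E w mu psi f x = Omega_psi E w mu psi f x
     + (1 / mu x) * (\<Sum>y\<in>nbrs E x. w x y * (f y / f x) * (lap_psi E w mu psi f x - lap_psi E w mu psi f y))"
  unfolding Gamma2_psi_def lap_mult_commutator[of f x E w mu "lap_psi E w mu psi f", OF assms, symmetric]
  by (simp add: algebra_simps)

lemma has_real_derivative_lap_psi_heat:
  assumes pos: "\<And>y. 0 < u y t"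
    and heat: "\<And>y. (u y has_real_derivative lap E w mu (\<lambda>z. u z t) y) (at t)"
    and psi: "\<And>s. 0 < s \<Longrightarrow> (psi has_real_derivative deriv psi s) (at s)"
  shows "((\<lambda>s. lap_psi E w mu psi (\<lambda>y. u y s) x) has_real_derivative
           Omega_psi E w mu psi (\<lambda>y. u y t) x) (at t)"
proof -
  define Lu where "Lu y = lap E w mu (\<lambda>z. u z t) y" for y
  define \<rho> where "\<rho> y = u y t / u x t" for y
  have ratio: "((\<lambda>s. psi (u y s / u x s)) has_real_derivative
      deriv psi (\<rho> y) * \<rho> y * (Lu y / u y t - Lu x / u x t)) (at t)" for y
  proof (rule DERIV_cong)
    have "((\<lambda>s. u y s / u x s) has_real_derivative (Lu y * u x t - u y t * Lu x) / (u x t * u x t)) (at t)"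
      unfolding Lu_def using heat pos[of x] by (intro DERIV_divide) auto
    from DERIV_chain2[OF psi this] pos
    show "((\<lambda>s. psi (u y s / u x s)) has_real_derivative
        deriv psi (\<rho> y) * ((Lu y * u x t - u y t * Lu x) / (u x t * u x t))) (at t)"
      unfolding \<rho>_def by simp
    show "deriv psi (\<rho> y) * ((Lu y * u x t - u y t * Lu x) / (u x t * u x t))
        = deriv psi (\<rho> y) * \<rho> y * (Lu y / u y t - Lu x / u x t)"
      unfolding \<rho>_def using pos[of x] pos[of y] by (simp add: field_simps)
  qed
  have "((\<lambda>s. (1 / mu x) * (\<Sum>y\<in>nbrs E x. w x y * (psi (u y s / u x s) - psi (u x s / u x s))))
      has_real_derivative (1 / mu x) * (\<Sum>y\<in>nbrs E x. w x y *
        (deriv psi (\<rho> y) * \<rho> y * (Lu y / u y t - Lu x / u x t)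
         - deriv psi (\<rho> x) * \<rho> x * (Lu x / u x t - Lu x / u x t)))) (at t)"
    by (intro DERIV_cmult DERIV_sum DERIV_diff ratio)
  thus ?thesis unfolding lap_psi_def lap_def Omega_psi_def Lu_def \<rho>_def by simp
qed

lemma psi_ratio_le_if_lap_psi_nonpos:
  assumes w_pos: "\<And>z. z \<in> nbrs E x \<Longrightarrow> 0 < w x z" and "0 < mu x" "finite (nbrs E x)"
    and f_pos: "\<And>z. 0 < f z" and psi_pos: "\<And>s. 0 < s \<Longrightarrow> 0 < psi s"
    and "lap_psi E w mu psi f x \<le> 0" and y: "y \<in> nbrs E x"
  shows "psi (f y / f x) \<le> psi 1 * (deg E w x / w x y)"
proof -
  have "(\<Sum>z\<in>nbrs E x. w x z * (psi (f z / f x) - psi 1)) \<le> 0"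
    using assms(2,6) f_pos[of x] unfolding lap_psi_def lap_def by (simp add: divide_le_0_iff)
  hence "(\<Sum>z\<in>nbrs E x. w x z * psi (f z / f x)) \<le> deg E w x * psi 1"
    unfolding deg_def sum_distrib_right by (simp add: right_diff_distrib sum_subtractf)
  moreover have "w x y * psi (f y / f x) \<le> (\<Sum>z\<in>nbrs E x. w x z * psi (f z / f x))"
    using w_pos f_pos psi_pos by (intro member_le_sum[OF y] assms(3)) (simp add: less_imp_le)
  ultimately show ?thesis using w_pos[OF y] by (simp add: field_simps)
qed

lemma Gamma_psi_le_if_ratio_le:
  assumes w_pos: "\<And>y. y \<in> nbrs E x \<Longrightarrow> 0 < w x y" and "0 < mu x"
    and f_pos: "\<And>y. 0 < f y" and psi_pos: "\<And>s. 0 < s \<Longrightarrow> 0 < psi s" and "0 \<le> deriv psi 1"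
    and ratio: "\<And>y. y \<in> nbrs E x \<Longrightarrow> f y / f x \<le> R"
  shows "Gamma_psi E w mu psi f x \<le> deg E w x / mu x * (deriv psi 1 * (R - 1) + psi 1)"
proof -
  have "(\<Sum>y\<in>nbrs E x. w x y * (psibar psi (f y / f x) - psibar psi (f x / f x)))
      \<le> (\<Sum>y\<in>nbrs E x. w x y * (deriv psi 1 * (R - 1) + psi 1))"
  proof (rule sum_mono)
    fix y assume y: "y \<in> nbrs E x"
    have "deriv psi 1 * (f y / f x - 1) \<le> deriv psi 1 * (R - 1)"
      using ratio[OF y] assms(5) by (intro mult_left_mono) auto
    moreover have "0 < psi (f y / f x)" using psi_pos f_pos by simp
    ultimately show "w x y * (psibar psi (f y / f x) - psibar psi (f x / f x))
        \<le> w x y * (deriv psi 1 * (R - 1) + psi 1)"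
      using w_pos[OF y] f_pos[of x] unfolding psibar_def by (intro mult_left_mono) auto
  qed
  thus ?thesis unfolding Gamma_psi_def lap_psi_def lap_def deg_def sum_distrib_right[symmetric]
    using assms(2) by (simp add: divide_right_mono)
qed

lemma weighted_ratio_sum_le:
  assumes w_pos: "\<And>y. y \<in> nbrs E x \<Longrightarrow> 0 < w x y" and "0 < mu x"
    and f_pos: "\<And>y. 0 < f y" and ratio: "\<And>y. y \<in> nbrs E x \<Longrightarrow> f y / f x \<le> R"
    and g_le: "\<And>y. g y \<le> Z"
  shows "(1 / mu x) * (\<Sum>y\<in>nbrs E x. w x y * (f y / f x) * (g y - g x))
       \<le> deg E w x / mu x * R * (Z - g x)"
proof -
  have "(\<Sum>y\<in>nbrs E x. w x y * (f y / f x) * (g y - g x)) \<le> (\<Sum>y\<in>nbrs E x. w x y * (R * (Z - g x)))"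
  proof (rule sum_mono)
    fix y assume y: "y \<in> nbrs E x"
    have "(f y / f x) * (g y - g x) \<le> (f y / f x) * (Z - g x)"
      using f_pos g_le[of y] by (intro mult_left_mono) (auto simp: less_imp_le)
    also have "\<dots> \<le> R * (Z - g x)" using ratio[OF y] g_le[of x] by (intro mult_right_mono) auto
    finally have "w x y * ((f y / f x) * (g y - g x)) \<le> w x y * (R * (Z - g x))"
      using w_pos[OF y] by (intro mult_left_mono) auto
    thus "w x y * (f y / f x) * (g y - g x) \<le> w x y * (R * (Z - g x))"
      by (simp only: mult.assoc)
  qed
  thus ?thesis unfolding deg_def sum_distrib_right[symmetric]
    using assms(2) by (simp add: divide_right_mono)
qed

lemma neg_lap_psi_le:
  assumes w_pos: "\<And>y. y \<in> nbrs E x \<Longrightarrow> 0 < w x y" and "0 < mu x"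
    and f_pos: "\<And>y. 0 < f y" and psi_pos: "\<And>s. 0 < s \<Longrightarrow> 0 < psi s"
  shows "- lap_psi E w mu psi f x \<le> deg E w x / mu x * psi 1"
proof -
  define S where "S = (\<Sum>y\<in>nbrs E x. w x y * (psi 1 - psi (f y / f x)))"
  have "(\<Sum>y\<in>nbrs E x. w x y * (psi (f y / f x) - psi (f x / f x))) = - S"
    unfolding S_def sum_negf[symmetric] using f_pos[of x]
    by (intro sum.cong) (simp_all add: algebra_simps)
  hence "- lap_psi E w mu psi f x = S / mu x" unfolding lap_psi_def lap_def by simp
  also have "\<dots> \<le> deg E w x * psi 1 / mu x"
  proof (rule divide_right_mono)
    show "S \<le> deg E w x * psi 1" unfolding S_def deg_def sum_distrib_right
      using w_pos f_pos psi_pos by (intro sum_mono mult_left_mono) (auto simp: less_imp_le)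
  qed (use assms(2) in simp)
  finally show ?thesis by simp
qed

section \<open>Heat flows under \<open>CD\<psi>(n,-K)\<close>\<close>

lemma heat_solution_has_real_derivative:
  assumes "heat_solution E w mu u" "0 < t"
  shows "(u x has_real_derivative lap E w mu (\<lambda>y. u y t) x) (at t)"
proof -
  obtain u' where u': "\<And>t. 0 \<le> t \<Longrightarrow>
      (u x has_real_derivative u' t) (at t within {0..}) \<and> u' t = lap E w mu (\<lambda>y. u y t) x"
    using assms(1) unfolding heat_solution_def by blast
  have "at t within {0..} = at t" using assms(2) by (intro at_within_interior) simp
  moreover have "(u x has_real_derivative u' t) (at t within {0..})" "u' t = lap E w mu (\<lambda>y. u y t) x"
    using u'[of t] assms(2) by auto
  ultimately show ?thesis by simp
qed

lemma D_w_ge_1: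
  fixes E :: "'v \<Rightarrow> 'v \<Rightarrow> bool" and x y :: 'v
  assumes graph: "weighted_graph E w mu" and bdd: "bdd_above {deg E w x / w x y | x y. E x y}"
    and "x \<noteq> y"
  shows "1 \<le> D_w E w"
proof -
  have "E\<^sup>*\<^sup>* x y" using graph unfolding weighted_graph_def by blast
  then obtain z where z: "E x z" using \<open>x \<noteq> y\<close> by (cases rule: converse_rtranclpE) auto
  have w_pos: "\<And>z'. z' \<in> nbrs E x \<Longrightarrow> 0 < w x z'"
    using graph unfolding weighted_graph_def nbrs_def by blast
  have "finite (nbrs E x)" using graph unfolding weighted_graph_def by blast
  moreover have z_nbr: "z \<in> nbrs E x" using z unfolding nbrs_def by simp
  ultimately have "w x z \<le> deg E w x" unfolding deg_def
    using w_pos by (intro member_le_sum) (auto simp: less_imp_le)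
  hence "1 \<le> deg E w x / w x z" using w_pos[OF z_nbr] by simp
  also have "\<dots> \<le> D_w E w" unfolding D_w_def using z by (intro cSup_upper bdd) auto
  finally show ?thesis .
qed

lemma deg_div_mu_le_D_mu:
  assumes "bdd_above (range (\<lambda>x. deg E w x / mu x))"
  shows "deg E w x / mu x \<le> D_mu E w mu"
  unfolding D_mu_def by (rule cSup_upper[OF _ assms]) simp

lemma deg_div_w_le_D_w:
  assumes "bdd_above {deg E w x / w x y | x y. E x y}" "y \<in> nbrs E x"
  shows "deg E w x / w x y \<le> D_w E w"
  unfolding D_w_def using assms(2) by (intro cSup_upper assms(1)) (auto simp: nbrs_def)

locale CD_heat_flow =
  fixes E :: "'v \<Rightarrow> 'v \<Rightarrow> bool" and w :: "'v \<Rightarrow> 'v \<Rightarrow> real" and mu :: "'v \<Rightarrow> real"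
    and psi :: "real \<Rightarrow> real" and n K :: real and u :: "'v \<Rightarrow> real \<Rightarrow> real" and D W R :: real
  assumes finite_nbrs: "\<And>x. finite (nbrs E x)"
    and w_pos: "\<And>x y. y \<in> nbrs E x \<Longrightarrow> 0 < w x y"
    and mu_pos: "\<And>x. 0 < mu x"
    and deg_mu_le: "\<And>x. deg E w x / mu x \<le> D"
    and deg_w_le: "\<And>x y. y \<in> nbrs E x \<Longrightarrow> deg E w x / w x y \<le> W"
    and psi_deriv: "\<And>s. 0 < s \<Longrightarrow> (psi has_real_derivative deriv psi s) (at s)"
    and psi_pos: "\<And>s. 0 < s \<Longrightarrow> 0 < psi s"
    and dpsi_pos: "\<And>s. 0 < s \<Longrightarrow> 0 < deriv psi s"
    and R_ge_1: "1 \<le> R" and psi_R: "psi R = psi 1 * W"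
    and n_pos: "0 < n" and K_pos: "0 < K"
    and curvature_dimension: "CD_psi E w mu psi n (- K)"
    and u_pos: "\<And>x t. 0 < t \<Longrightarrow> 0 < u x t"
    and heat_eq: "\<And>x t. 0 < t \<Longrightarrow> (u x has_real_derivative lap E w mu (\<lambda>y. u y t) x) (at t)"
begin

lemma Li_Yau_slope_nonneg: "0 \<le> deriv psi 1 * (R - 1) + psi 1"
  using R_ge_1 dpsi_pos[of 1] psi_pos[of 1] by simp

lemma D_nonneg: "0 \<le> D"
proof -
  have "0 \<le> deg E w x" for x unfolding deg_def using w_pos by (intro sum_nonneg) (simp add: less_imp_le)
  thus ?thesis using deg_mu_le mu_pos by (meson divide_nonneg_pos order_trans)
qed

lemma ratio_le_R:
  assumes "0 < t" "lap_psi E w mu psi (\<lambda>y. u y t) x \<le> 0" "y \<in> nbrs E x"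
  shows "u y t / u x t \<le> R"
proof -
  have "psi (u y t / u x t) \<le> psi 1 * (deg E w x / w x y)"
    using psi_ratio_le_if_lap_psi_nonpos[OF _ mu_pos finite_nbrs _ psi_pos assms(2,3)] w_pos u_pos assms(1)
    by blast
  also have "\<dots> \<le> psi R" unfolding psi_R using deg_w_le[OF assms(3)] psi_pos[of 1]
    by (intro mult_left_mono) auto
  finally show ?thesis
    using strict_mono_on_less_eq[OF DERIV_pos_imp_strict_mono_on_greaterThan[OF psi_deriv dpsi_pos]]
      u_pos assms(1) R_ge_1 by simp
qed

lemma riccati_inequality:
  fixes t :: real and Z :: real
  defines "f \<equiv> \<lambda>y. u y t"
  assumes t: "0 < t" and "0 \<le> - lap_psi E w mu psi f x"
    and Z: "\<And>y. - lap_psi E w mu psi f y \<le> Z"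
  shows "- Omega_psi E w mu psi f x \<le> - (2 / n) * (- lap_psi E w mu psi f x)\<^sup>2
          + 2 * K * (D * (deriv psi 1 * (R - 1) + psi 1)) + D * R * (Z - - lap_psi E w mu psi f x)"
proof -
  have f_pos: "\<And>y. 0 < f y" unfolding f_def using u_pos t by simp
  have ratio: "\<And>y. y \<in> nbrs E x \<Longrightarrow> f y / f x \<le> R"
    using ratio_le_R t assms(3) unfolding f_def by simp
  define S where "S = (1 / mu x) * (\<Sum>y\<in>nbrs E x. w x y * (f y / f x)
                        * (- lap_psi E w mu psi f y - - lap_psi E w mu psi f x))"
  define P where "P = deriv psi 1 * (R - 1) + psi 1"
  define Q where "Q = (1 / n) * (lap_psi E w mu psi f x)\<^sup>2"
  have P: "0 \<le> P" unfolding P_def by (rule Li_Yau_slope_nonneg)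
  have Gamma2: "2 * Gamma2_psi E w mu psi f x = Omega_psi E w mu psi f x + S"
    unfolding two_Gamma2_psi_eq[of f x, OF f_pos[THEN less_imp_neq, symmetric]] S_def by simp
  have "Q + (- K) * Gamma_psi E w mu psi f x \<le> Gamma2_psi E w mu psi f x"
    using curvature_dimension f_pos unfolding CD_psi_def Q_def by (simp add: less_imp_le)
  hence CD_x: "2 * Q - 2 * K * Gamma_psi E w mu psi f x \<le> 2 * Gamma2_psi E w mu psi f x" by linarith
  have "Gamma_psi E w mu psi f x \<le> deg E w x / mu x * P" unfolding P_def
    by (rule Gamma_psi_le_if_ratio_le) (use w_pos mu_pos f_pos psi_pos ratio dpsi_pos[of 1] in auto)
  also have "\<dots> \<le> D * P" using deg_mu_le[of x] P by (rule mult_right_mono)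
  finally have Gamma: "2 * K * Gamma_psi E w mu psi f x \<le> 2 * K * (D * P)"
    using K_pos by (intro mult_left_mono) auto
  have "S \<le> deg E w x / mu x * R * (Z - - lap_psi E w mu psi f x)"
    unfolding S_def by (rule weighted_ratio_sum_le) (use w_pos mu_pos f_pos ratio Z in auto)
  also have "\<dots> \<le> D * R * (Z - - lap_psi E w mu psi f x)"
    using deg_mu_le[of x] R_ge_1 Z[of x] by (intro mult_right_mono) auto
  finally have S: "S \<le> D * R * (Z - - lap_psi E w mu psi f x)" .
  have "- Omega_psi E w mu psi f x = S - 2 * Gamma2_psi E w mu psi f x" using Gamma2 by linarith
  also have "\<dots> \<le> S - 2 * Q + 2 * K * Gamma_psi E w mu psi f x" using CD_x by linarith
  also have "\<dots> \<le> D * R * (Z - - lap_psi E w mu psi f x) - 2 * Q + 2 * K * (D * P)"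
    using S Gamma by linarith
  also have "2 * Q = (2 / n) * (- lap_psi E w mu psi f x)\<^sup>2" unfolding Q_def by simp
  finally show ?thesis unfolding P_def by linarith
qed

sublocale riccati_family "\<lambda>x t. - lap_psi E w mu psi (\<lambda>y. u y t) x"
    "\<lambda>x t. - Omega_psi E w mu psi (\<lambda>y. u y t) x" "2 / n"
    "2 * K * (D * (deriv psi 1 * (R - 1) + psi 1))" "D * R" "D * psi 1"
proof
  show "((\<lambda>t. - lap_psi E w mu psi (\<lambda>y. u y t) x) has_real_derivative
      - Omega_psi E w mu psi (\<lambda>y. u y t) x) (at t)" if "0 < t" for x t
    using that u_pos heat_eq psi_deriv by (intro DERIV_minus has_real_derivative_lap_psi_heat) auto
  show "- lap_psi E w mu psi (\<lambda>y. u y t) x \<le> D * psi 1" if "0 < t" for x t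
  proof -
    have "- lap_psi E w mu psi (\<lambda>y. u y t) x \<le> deg E w x / mu x * psi 1"
      by (rule neg_lap_psi_le) (use w_pos mu_pos u_pos that psi_pos in auto)
    also have "\<dots> \<le> D * psi 1" using deg_mu_le[of x] psi_pos[of 1] by (intro mult_right_mono) auto
    finally show ?thesis .
  qed
  show "- Omega_psi E w mu psi (\<lambda>y. u y t) x \<le> - (2 / n) * (- lap_psi E w mu psi (\<lambda>y. u y t) x)\<^sup>2
      + 2 * K * (D * (deriv psi 1 * (R - 1) + psi 1)) + D * R * (Z - - lap_psi E w mu psi (\<lambda>y. u y t) x)"
    if "0 < t" "0 \<le> - lap_psi E w mu psi (\<lambda>y. u y t) x"
      "\<And>y. - lap_psi E w mu psi (\<lambda>y'. u y' t) y \<le> Z" for x t Z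
    using riccati_inequality that by blast
  show "0 \<le> 2 * K * (D * (deriv psi 1 * (R - 1) + psi 1))"
    using K_pos D_nonneg Li_Yau_slope_nonneg by simp
qed (use n_pos D_nonneg R_ge_1 psi_pos[of 1] in simp_all)

theorem Li_Yau_inequality:
  assumes "0 < t"
  shows "Gamma_psi E w mu psi (\<lambda>y. u y t) x - deriv psi 1 * deriv (u x) t / u x t
    \<le> n / (2 * t) + sqrt (n * K * (D * (deriv psi 1 * (R - 1) + psi 1)))"
proof -
  have "deriv (u x) t = lap E w mu (\<lambda>y. u y t) x" using heat_eq[OF assms] by (rule DERIV_imp_deriv)
  hence "Gamma_psi E w mu psi (\<lambda>y. u y t) x - deriv psi 1 * deriv (u x) t / u x t
      = - lap_psi E w mu psi (\<lambda>y. u y t) x"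
    using Gamma_psi_sub_lap_eq[of "\<lambda>y. u y t" x] u_pos[OF assms, of x] by simp
  also have "\<dots> \<le> 1 / (2 / n * t) + sqrt (2 * K * (D * (deriv psi 1 * (R - 1) + psi 1)) / (2 / n))"
    by (rule Li_Yau_bound[OF assms])
  also have "\<dots> = n / (2 * t) + sqrt (n * K * (D * (deriv psi 1 * (R - 1) + psi 1)))"
    using n_pos by simp
  finally show ?thesis .
qed

end

lemma CD_heat_flow_if_heat_solution:
  fixes E :: "'v \<Rightarrow> 'v \<Rightarrow> bool"
  assumes graph: "weighted_graph E w mu" and infinite: "infinite (UNIV :: 'v set)"
    and Dmu_fin: "bdd_above (range (\<lambda>x. deg E w x / mu x))"
    and Dw_fin: "bdd_above {deg E w x / w x y | x y. E x y}"
    and "0 < n" "0 < K"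
    and psi_diff: "\<forall>s>0. psi differentiable (at s)"
    and psi_pos: "\<forall>s>0. psi s > 0" and dpsi_pos: "\<forall>s>0. deriv psi s > 0"
    and img: "psi 1 * D_w E w \<in> psi ` {0<..}"
    and "CD_psi E w mu psi n (- K)" and heat: "heat_solution E w mu u"
  shows "CD_heat_flow E w mu psi n K u (D_mu E w mu) (D_w E w)
           (the_inv_into {0<..} psi (psi 1 * D_w E w))"
proof
  have psi_deriv: "\<And>s. 0 < s \<Longrightarrow> (psi has_real_derivative deriv psi s) (at s)"
    using psi_diff DERIV_deriv_iff_real_differentiable by blast
  thus "0 < s \<Longrightarrow> (psi has_real_derivative deriv psi s) (at s)" for s .
  have mono: "strict_mono_on {0<..} psi"
    by (rule DERIV_pos_imp_strict_mono_on_greaterThan[where f' = "deriv psi"])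
      (use psi_deriv dpsi_pos in auto)
  show "psi (the_inv_into {0<..} psi (psi 1 * D_w E w)) = psi 1 * D_w E w"
    using f_the_inv_into_f[OF strict_mono_on_imp_inj_on[OF mono] img] .
  obtain y :: 'v where "y \<noteq> undefined" using ex_new_if_finite[OF infinite, of "{undefined}"] by blast
  hence "1 \<le> D_w E w" by (rule D_w_ge_1[OF graph Dw_fin])
  thus "1 \<le> the_inv_into {0<..} psi (psi 1 * D_w E w)"
    using psi_pos by (intro strict_mono_on_le_the_inv_into[OF mono img]) auto
  show "finite (nbrs E x)" "y \<in> nbrs E x \<Longrightarrow> 0 < w x y" "0 < mu x" for x y
    using graph unfolding weighted_graph_def nbrs_def by auto
  show "0 < u x t" if "0 < t" for x t using heat that unfolding heat_solution_def by simp
qed (use assms deg_div_mu_le_D_mu[OF Dmu_fin] deg_div_w_le_D_w[OF Dw_fin]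
       heat_solution_has_real_derivative[OF heat] in auto)

theorem mainTheorem8:
  fixes E :: "'v \<Rightarrow> 'v \<Rightarrow> bool" and w :: "'v \<Rightarrow> 'v \<Rightarrow> real" and mu :: "'v \<Rightarrow> real"
    and psi :: "real \<Rightarrow> real" and u :: "'v \<Rightarrow> real \<Rightarrow> real" and n K :: real
  assumes graph: "weighted_graph E w mu"
    and infinite: "infinite (UNIV :: 'v set)"
    and Dmu_fin: "bdd_above (range (\<lambda>x. deg E w x / mu x))"
    and Dw_fin: "bdd_above {deg E w x / w x y | x y. E x y}"
    and n_pos: "n > 0" and K_pos: "K > 0"
    and psi_diff: "\<forall>s>0. psi differentiable (at s)"
    and psi_C1: "continuous_on {0<..} (deriv psi)"
    and psi_concave: "concave_on {0<..} psi"
    and psi_pos: "\<forall>s>0. psi s > 0"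
    and dpsi_pos: "\<forall>s>0. deriv psi s > 0"
    and img: "psi 1 * D_w E w \<in> psi ` {0<..}"
    and CD: "CD_psi E w mu psi n (- K)"
    and heat: "heat_solution E w mu u"
  shows "\<forall>x. \<forall>t>0.
     Gamma_psi E w mu psi (\<lambda>y. u y t) x - deriv psi 1 * deriv (u x) t / u x t
       \<le> n / (2 * t) + sqrt (n * K *
            (D_mu E w mu * (deriv psi 1 * (the_inv_into {0<..} psi (psi 1 * D_w E w) - 1) + psi 1)))"
proof -
  interpret CD_heat_flow E w mu psi n K u "D_mu E w mu" "D_w E w"
      "the_inv_into {0<..} psi (psi 1 * D_w E w)"
    by (rule CD_heat_flow_if_heat_solution) (fact assms)+
  show ?thesis using Li_Yau_inequality by blast
qed

end
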